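(* Let $D_{-}F(z)=F(z)-F(z-1)$, applied coefficientwise. Then \[ D_{-}H_B(z)=-\sum_{k=0}^{\infty}Y_{-k}(z-1)^k\,H_B(z), \] equivalently $H_B(z+1)-H_B(z)=-\sum_{k\ge0}Y_{-k}z^kH_B(z+1)$.
   Context: Normalized multiple Bernoulli polynomials: for integers $k\ge0$, $\zeta(-k|z)=-\frac{B_{k+1}(z)}{k+1}$ ($B_n(z)$ the Bernoulli polynomials, $B_n=B_n(0)$), and for $r\ge2$, $k_j\ge0$, $\zeta(-k_1,\ldots,-k_r|z)=-\frac{1}{k_r+1}\zeta(-k_1,\ldots,-k_{r-2},-k_{r-1}-k_r-1|z)-\frac12\zeta(-k_1,\ldots,-k_{r-2},-k_{r-1}-k_r|z)+\sum_{q=1}^{k_r}(-k_r)_q\frac{B_{q+1}}{(q+1)!}\zeta(-k_1,\ldots,-k_{r-2},-k_{r-1}-k_r+q|z)$, with $(a)_q=a(a+1)\cdots(a+q-1)$; the depth-zero (empty tuple) value is $1$. Let $\{Y_{-n}\}_{n\ge0}$ be non-commuting formal variables and \[ H_B(z)=\sum\zeta(-n_1,\ldots,-n_r|z)\,Y_{-n_1}\cdots Y_{-n_r}, \] the sum over all tuples (including the empty tuple, $r=0$) of non-positive integers. *)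

theory Defs
  imports Complex_Main
begin

text \<open>Bernoulli numbers with the convention B_1 = -1/2:
  B_0 = 1 and sum_{k=0}^{n} binom(n+1,k) B_k = 0 for n >= 1.\<close>
fun bernoulli_num :: "nat \<Rightarrow> complex" where
  "bernoulli_num n =
     (if n = 0 then 1
      else - (\<Sum>k<n. of_nat (Suc n choose k) * bernoulli_num k) / of_nat (Suc n))"

definition bernpoly :: "nat \<Rightarrow> complex \<Rightarrow> complex" where
  "bernpoly n z = (\<Sum>k\<le>n. of_nat (n choose k) * bernoulli_num k * z ^ (n - k))"

text \<open>Normalized multiple Bernoulli polynomials, computed on the REVERSED
  index list: mzeta_rev [k_r, k_{r-1}, ..., k_1] z = zeta(-k_1,...,-k_r | z).\<close>
fun mzeta_rev :: "nat list \<Rightarrow> complex \<Rightarrow> complex" where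
  "mzeta_rev [] z = 1"
| "mzeta_rev [k] z = - bernpoly (Suc k) z / of_nat (Suc k)"
| "mzeta_rev (kr # kr1 # rest) z =
     - (1 / of_nat (Suc kr)) * mzeta_rev ((kr1 + kr + 1) # rest) z
     - (1/2) * mzeta_rev ((kr1 + kr) # rest) z
     + (\<Sum>q\<in>{1..kr}. pochhammer (- of_nat kr) q * bernoulli_num (Suc q) / fact (Suc q)
                        * mzeta_rev ((kr1 + kr - q) # rest) z)"

text \<open>zeta(-k_1,...,-k_r | z) for ks = [k_1,...,k_r]; this is the coefficient
  of the word Y_{-k_1}...Y_{-k_r} in H_B(z).\<close>
definition mzeta :: "nat list \<Rightarrow> complex \<Rightarrow> complex" where
  "mzeta ks z = mzeta_rev (rev ks) z"

text \<open>Non-commutative formal power series in the letters Y_{-n} (n :: nat),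
  represented by their coefficient functions on words (lists of indices n).\<close>
type_synonym ncseries = "nat list \<Rightarrow> complex"

definition ncmult :: "ncseries \<Rightarrow> ncseries \<Rightarrow> ncseries" where
  "ncmult F G w = (\<Sum>i\<le>length w. F (take i w) * G (drop i w))"

definition H_B :: "complex \<Rightarrow> ncseries" where
  "H_B z = (\<lambda>w. mzeta w z)"

definition linser :: "(nat \<Rightarrow> complex) \<Rightarrow> ncseries" where
  "linser c w = (case w of [k] \<Rightarrow> c k | _ \<Rightarrow> 0)"

definition Dminus :: "(complex \<Rightarrow> ncseries) \<Rightarrow> complex \<Rightarrow> ncseries" where
  "Dminus F z = (\<lambda>w. F z w - F (z - 1) w)"

end

theory Submission
  imports Defs "HOL-Computational_Algebra.Formal_Power_Series"
begin

text \<open>Only the coefficient of a word k # ws in the product with the linear series survives, so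
  the theorem says that z-differencing zeta(ws @ [k] | -) multiplies by -(z-1)^k.
  The depth recursion is linear in its lower-depth values, hence commutes with z-differencing,
  and by induction everything reduces to two identities for Bernoulli polynomials:
  B_n(x+1) - B_n(x) = n x^(n-1) and, in depth two, the fact that the recursion applied to the
  powers y^m returns -y^k B_(r+1)(y+1)/(r+1). Both follow from the generating function
  t/(e^t - 1) of the Bernoulli numbers, together with the vanishing of odd B_n for n > 1.\<close>

declare bernoulli_num.simps [simp del]

lemma bernoulli_num_0 [simp]: "bernoulli_num 0 = 1"
  by (simp add: bernoulli_num.simps)

lemma bernoulli_num_1 [simp]: "bernoulli_num 1 = - 1 / 2"
  by (simp add: bernoulli_num.simps)

lemma sum_binomial_bernoulli_num:
  assumes "n \<ge> 2"
  shows "(\<Sum>k<n. of_nat (n choose k) * bernoulli_num k) = 0"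
proof -
  obtain m where m: "n = Suc m" "m \<ge> 1" using assms by (cases n) auto
  have rec: "bernoulli_num m = - (\<Sum>k<m. of_nat (n choose k) * bernoulli_num k) / of_nat n"
    using m by (subst bernoulli_num.simps) simp
  have "(\<Sum>k<n. of_nat (n choose k) * bernoulli_num k)
      = (\<Sum>k<m. of_nat (n choose k) * bernoulli_num k) + of_nat n * bernoulli_num m"
    using m by simp
  also have "\<dots> = 0" unfolding rec by (simp add: m(1) del: of_nat_Suc)
  finally show ?thesis .
qed

definition bernoulli_fps :: "complex fps" where
  "bernoulli_fps = Abs_fps (\<lambda>n. bernoulli_num n / fact n)"

lemma bernoulli_fps_times_exp_minus_1: "bernoulli_fps * (fps_exp 1 - 1) = fps_X"
proof (rule fps_ext)
  fix n
  show "fps_nth (bernoulli_fps * (fps_exp 1 - 1)) n = fps_nth fps_X n"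
  proof (cases "n \<ge> 2")
    case True
    have "fps_nth (bernoulli_fps * (fps_exp 1 - 1)) n
        = (\<Sum>i=0..n. bernoulli_num i / fact i * (if n - i = 0 then 0 else 1 / fact (n - i)))"
      by (simp add: fps_mult_nth bernoulli_fps_def) (rule sum.cong, auto)
    also have "\<dots> = (\<Sum>i<n. bernoulli_num i / fact i * (1 / fact (n - i)))"
      by (rule sum.mono_neutral_cong_right) auto
    also have "\<dots> = (\<Sum>i<n. of_nat (n choose i) * bernoulli_num i) / fact n"
      unfolding sum_divide_distrib by (rule sum.cong) (auto simp: binomial_fact)
    also have "\<dots> = 0" using sum_binomial_bernoulli_num[OF True] by simp
    finally show ?thesis using True by simp
  next
    case False
    then have "n = 0 \<or> n = 1" by auto
    then show ?thesis by (auto simp: bernoulli_fps_def fps_mult_nth)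
  qed
qed

lemma fps_exp_1_minus_1_nonzero: "fps_exp 1 - 1 \<noteq> (0 :: complex fps)"
proof
  assume "fps_exp 1 - 1 = (0 :: complex fps)"
  then have "fps_nth (fps_exp 1 - 1) 1 = (0 :: complex)" by simp
  then show False by simp
qed

text \<open>B(-t) = t e^t/(e^t - 1) = B(t) + t.\<close>
lemma bernoulli_fps_reflect: "bernoulli_fps oo (- fps_X) = bernoulli_fps + fps_X"
proof -
  let ?R = "bernoulli_fps oo (- fps_X)"
  have reflected: "?R * (fps_exp (-1) - 1) = - fps_X"
    using arg_cong[OF bernoulli_fps_times_exp_minus_1, of "\<lambda>F. F oo (- fps_X)"]
    by (simp add: fps_compose_mult_distrib fps_compose_sub_distrib)
  have exp_inverse: "fps_exp (-1) * fps_exp 1 = (1 :: complex fps)"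
    by (simp flip: fps_exp_add_mult)
  have "?R * (fps_exp 1 - 1) = - (?R * (fps_exp (-1) * fps_exp 1 - fps_exp 1))"
    unfolding exp_inverse by (simp add: algebra_simps)
  also have "\<dots> = - (?R * (fps_exp (-1) - 1) * fps_exp 1)"
    by (simp add: algebra_simps)
  finally have "?R * (fps_exp 1 - 1) = fps_X * fps_exp 1"
    unfolding reflected by simp
  then have "(?R - bernoulli_fps) * (fps_exp 1 - 1) = fps_X * (fps_exp 1 - 1)"
    using bernoulli_fps_times_exp_minus_1 by (simp add: algebra_simps)
  then have "?R - bernoulli_fps = fps_X" using fps_exp_1_minus_1_nonzero by simp
  then show ?thesis by (simp add: diff_eq_eq add.commute)
qed

lemma bernoulli_num_odd_eq_0:
  assumes "odd n" "n \<noteq> 1"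
  shows "bernoulli_num n = 0"
proof -
  have "fps_nth (bernoulli_fps oo (- fps_X)) n = fps_nth (bernoulli_fps + fps_X) n"
    by (simp only: bernoulli_fps_reflect)
  then have "- (bernoulli_num n / fact n) = bernoulli_num n / fact n"
    using assms by (simp add: fps_compose_uminus' bernoulli_fps_def)
  then show ?thesis by simp
qed

lemma bernpoly_eq_fps_nth: "bernpoly n x = fact n * fps_nth (bernoulli_fps * fps_exp x) n"
proof -
  have "fps_nth (bernoulli_fps * fps_exp x) n
      = (\<Sum>i=0..n. bernoulli_num i / fact i * (x ^ (n - i) / fact (n - i)))"
    by (simp add: fps_mult_nth bernoulli_fps_def)
  also have "\<dots> = (\<Sum>i\<le>n. of_nat (n choose i) * bernoulli_num i * x ^ (n - i)) / fact n"
    unfolding sum_divide_distrib atLeast0AtMost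
    by (rule sum.cong) (auto simp: binomial_fact)
  finally show ?thesis by (simp add: bernpoly_def)
qed

lemma bernpoly_plus_1_diff:
  assumes "n \<ge> 1"
  shows "bernpoly n (x + 1) - bernpoly n x = of_nat n * x ^ (n - 1)"
proof -
  have "bernoulli_fps * fps_exp (x + 1) - bernoulli_fps * fps_exp x
      = bernoulli_fps * (fps_exp 1 - 1) * fps_exp x"
    by (simp add: fps_exp_add_mult algebra_simps)
  then have shift: "bernoulli_fps * fps_exp (x + 1) - bernoulli_fps * fps_exp x = fps_X * fps_exp x"
    by (simp only: bernoulli_fps_times_exp_minus_1)
  have "bernpoly n (x + 1) - bernpoly n x
      = fact n * fps_nth (bernoulli_fps * fps_exp (x + 1) - bernoulli_fps * fps_exp x) n"
    by (simp add: bernpoly_eq_fps_nth algebra_simps)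
  also have "\<dots> = fact n * (x ^ (n - 1) / fact (n - 1))"
    unfolding shift using assms by (cases n) (auto simp: fps_X_mult_nth)
  also have "\<dots> = of_nat n * x ^ (n - 1)"
    using assms by (cases n) (auto simp: field_simps)
  finally show ?thesis .
qed

lemma bernpoly_Suc_expand:
  "bernpoly (Suc n) y = y ^ Suc n + of_nat (Suc n) * bernoulli_num 1 * y ^ n
     + (\<Sum>q\<in>{1..n}. of_nat (Suc n choose Suc q) * bernoulli_num (Suc q) * y ^ (n - q))"
proof -
  have "{..n} = insert 0 {1..n}" by auto
  then have "(\<Sum>i\<le>n. of_nat (Suc n choose Suc i) * bernoulli_num (Suc i) * y ^ (Suc n - Suc i))
      = of_nat (Suc n) * bernoulli_num 1 * y ^ n
        + (\<Sum>q\<in>{1..n}. of_nat (Suc n choose Suc q) * bernoulli_num (Suc q) * y ^ (n - q))"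
    by simp
  then show ?thesis
    unfolding bernpoly_def
    by (subst sum.atMost_Suc_shift) (simp del: binomial_Suc_Suc add: add.assoc)
qed

definition mzeta_coeff :: "nat \<Rightarrow> nat \<Rightarrow> complex" where
  "mzeta_coeff r q = pochhammer (- of_nat r) q * bernoulli_num (Suc q) / fact (Suc q)"

lemma mzeta_coeff_eq_binomial:
  assumes "1 \<le> q" "q \<le> r"
  shows "- mzeta_coeff r q = of_nat (Suc r choose Suc q) * bernoulli_num (Suc q) / of_nat (Suc r)"
proof -
  have poch: "pochhammer (- of_nat r) q = (-1) ^ q * fact q * (of_nat (r choose q) :: complex)"
    by (simp add: binomial_gbinomial gbinomial_pochhammer)
  have sign: "(-1) ^ Suc q * bernoulli_num (Suc q) = bernoulli_num (Suc q)"
    using bernoulli_num_odd_eq_0[of "Suc q"] assms by (cases "even q") auto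
  have "of_nat (Suc r choose Suc q) * (of_nat (Suc q) :: complex) = of_nat (Suc r) * of_nat (r choose q)"
    using Suc_times_binomial[of q r] by (metis of_nat_mult mult.commute)
  then have binom: "of_nat (Suc r choose Suc q)
      = of_nat (Suc r) * of_nat (r choose q) / (of_nat (Suc q) :: complex)"
    by (simp add: eq_divide_eq del: of_nat_Suc)
  have "- mzeta_coeff r q
      = ((-1) ^ Suc q * bernoulli_num (Suc q)) * of_nat (r choose q) / of_nat (Suc q)"
    unfolding mzeta_coeff_def poch fact_Suc
    by (simp add: field_simps del: of_nat_Suc fact_Suc)
  also have "\<dots> = of_nat (Suc r choose Suc q) * bernoulli_num (Suc q) / of_nat (Suc r)"
    unfolding sign binom by (simp add: field_simps del: of_nat_Suc)
  finally show ?thesis .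
qed

lemma bernpoly_Suc_plus_1_mzeta_coeff:
  "bernpoly (Suc r) (y + 1) / of_nat (Suc r)
     = y ^ Suc r / of_nat (Suc r) + y ^ r / 2 - (\<Sum>q\<in>{1..r}. mzeta_coeff r q * y ^ (r - q))"
proof -
  have nz: "(of_nat (Suc r) :: complex) \<noteq> 0" by (simp only: of_nat_eq_0_iff)
  let ?S = "\<Sum>q\<in>{1..r}. of_nat (Suc r choose Suc q) * bernoulli_num (Suc q) * y ^ (r - q)"
  have coeffs: "- (\<Sum>q\<in>{1..r}. mzeta_coeff r q * y ^ (r - q)) = ?S / of_nat (Suc r)"
    unfolding sum_divide_distrib sum_negf[symmetric]
  proof (rule sum.cong)
    fix q assume "q \<in> {1..r}"
    then have q: "1 \<le> q" "q \<le> r" by simp_all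
    have "- (mzeta_coeff r q * y ^ (r - q)) = (- mzeta_coeff r q) * y ^ (r - q)"
      by simp
    also have "\<dots> = of_nat (Suc r choose Suc q) * bernoulli_num (Suc q) * y ^ (r - q) / of_nat (Suc r)"
      unfolding mzeta_coeff_eq_binomial[OF q] by simp
    finally show "- (mzeta_coeff r q * y ^ (r - q))
        = of_nat (Suc r choose Suc q) * bernoulli_num (Suc q) * y ^ (r - q) / of_nat (Suc r)" .
  qed simp
  have "bernpoly (Suc r) (y + 1) = bernpoly (Suc r) y + of_nat (Suc r) * y ^ r"
    using bernpoly_plus_1_diff[of "Suc r" y] by (simp add: algebra_simps)
  also have "\<dots> = y ^ Suc r + of_nat (Suc r) / 2 * y ^ r + ?S"
    unfolding bernpoly_Suc_expand bernoulli_num_1 by (simp add: algebra_simps del: binomial_Suc_Suc)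
  finally have "bernpoly (Suc r) (y + 1) / of_nat (Suc r)
      = (y ^ Suc r + of_nat (Suc r) / 2 * y ^ r + ?S) / of_nat (Suc r)"
    by (rule arg_cong)
  also have "\<dots> = y ^ Suc r / of_nat (Suc r) + y ^ r / 2 + ?S / of_nat (Suc r)"
  proof -
    have "of_nat (Suc r) / 2 * y ^ r / of_nat (Suc r) = y ^ r / 2"
      using nz by (simp del: of_nat_Suc)
    then show ?thesis by (simp only: add_divide_distrib)
  qed
  finally show ?thesis unfolding coeffs[symmetric] by simp
qed

definition mzeta_step :: "nat \<Rightarrow> nat \<Rightarrow> (nat \<Rightarrow> complex) \<Rightarrow> complex" where
  "mzeta_step r r' f = - (1 / of_nat (Suc r)) * f (r' + r + 1) - (1/2) * f (r' + r)
     + (\<Sum>q\<in>{1..r}. mzeta_coeff r q * f (r' + r - q))"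

lemma mzeta_rev_Cons_Cons:
  "mzeta_rev (r # r' # rest) z = mzeta_step r r' (\<lambda>m. mzeta_rev (m # rest) z)"
  by (simp add: mzeta_step_def mzeta_coeff_def)

lemma mzeta_step_diff:
  assumes "\<And>m. f m - g m = a * h m"
  shows "mzeta_step r r' f - mzeta_step r r' g = a * mzeta_step r r' h"
proof -
  have "f = (\<lambda>m. g m + a * h m)"
    using assms by (simp add: fun_eq_iff diff_eq_eq add.commute)
  then show ?thesis
    unfolding mzeta_step_def by (simp add: algebra_simps sum.distrib sum_distrib_left)
qed

lemma mzeta_step_powers:
  "mzeta_step r k (\<lambda>m. y ^ m) = - (y ^ k) * (bernpoly (Suc r) (y + 1) / of_nat (Suc r))"
proof -
  have "(\<Sum>q\<in>{1..r}. mzeta_coeff r q * y ^ (k + r - q)) = y ^ k * (\<Sum>q\<in>{1..r}. mzeta_coeff r q * y ^ (r - q))"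
    unfolding sum_distrib_left by (rule sum.cong) (auto simp: power_add[symmetric])
  then show ?thesis
    unfolding mzeta_step_def bernpoly_Suc_plus_1_mzeta_coeff
    by (simp add: algebra_simps power_add)
qed

lemma mzeta_rev_singleton_diff: "mzeta_rev [k] z - mzeta_rev [k] (z - 1) = - ((z - 1) ^ k)"
proof -
  have "bernpoly (Suc k) z - bernpoly (Suc k) (z - 1) = of_nat (Suc k) * (z - 1) ^ k"
    using bernpoly_plus_1_diff[of "Suc k" "z - 1"] by simp
  then show ?thesis by (simp add: field_simps del: of_nat_Suc)
qed

lemma mzeta_rev_Cons_snoc_diff:
  "mzeta_rev (m # rest @ [k]) z - mzeta_rev (m # rest @ [k]) (z - 1)
     = - ((z - 1) ^ k) * mzeta_rev (m # rest) z"
proof (induction rest arbitrary: m)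
  case Nil
  have "mzeta_rev [m, k] z - mzeta_rev [m, k] (z - 1) = - 1 * mzeta_step m k (\<lambda>j. (z - 1) ^ j)"
    unfolding mzeta_rev_Cons_Cons
    by (rule mzeta_step_diff) (simp add: mzeta_rev_singleton_diff del: mzeta_rev.simps)
  then show ?case by (simp add: mzeta_step_powers)
next
  case (Cons r rest)
  show ?case
    unfolding append_Cons mzeta_rev_Cons_Cons
    by (rule mzeta_step_diff) (use Cons.IH in simp)
qed

lemma mzeta_rev_snoc_diff:
  "mzeta_rev (xs @ [k]) z - mzeta_rev (xs @ [k]) (z - 1) = - ((z - 1) ^ k) * mzeta_rev xs z"
  using mzeta_rev_singleton_diff mzeta_rev_Cons_snoc_diff by (cases xs) simp_all

lemma ncmult_linser_Cons: "ncmult (linser c) F (k # ws) = c k * F ws"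
proof -
  let ?f = "\<lambda>i. linser c (take i (k # ws)) * F (drop i (k # ws))"
  have "ncmult (linser c) F (k # ws) = ?f 0 + (\<Sum>i\<le>length ws. ?f (Suc i))"
    unfolding ncmult_def by (simp only: length_Cons sum.atMost_Suc_shift)
  also have "(\<Sum>i\<le>length ws. ?f (Suc i)) = (\<Sum>i\<in>{0}. ?f (Suc i))"
    by (rule sum.mono_neutral_right) (auto simp: linser_def split: list.splits)
  also have "?f 0 = 0"
    by (simp add: linser_def)
  also have "(\<Sum>i\<in>{0}. ?f (Suc i)) = c k * F ws"
    by (simp add: linser_def)
  finally show ?thesis by simp
qed

lemma ncmult_linser_Nil: "ncmult (linser c) F [] = 0"
  by (simp add: ncmult_def linser_def)

theorem theoremC:
  fixes z :: complex
  shows "Dminus H_B z = (\<lambda>w. - ncmult (linser (\<lambda>k. (z - 1) ^ k)) (H_B z) w)"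
proof (rule ext)
  fix w :: "nat list"
  show "Dminus H_B z w = - ncmult (linser (\<lambda>k. (z - 1) ^ k)) (H_B z) w"
  proof (cases w)
    case Nil
    then show ?thesis by (simp add: Dminus_def H_B_def mzeta_def ncmult_linser_Nil)
  next
    case (Cons k ws)
    then show ?thesis
      using mzeta_rev_snoc_diff[of "rev ws" k z]
      by (simp add: Dminus_def H_B_def mzeta_def ncmult_linser_Cons)
  qed
qed

end
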